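(* Let $k$ be a positive integer. For any graph $H=(W,F)$ there exists a graph $G$ containing $W$ as a subset of its vertex set such that the induced subgraph $G[W]$ is isomorphic to $H$ and $W$ is a minimum $k$-PVC of $G$.
   Context: All graphs are finite and simple. For a graph $G$ and a positive integer $k$, a $k$-path vertex cover ($k$-PVC) of $G$ is a set $S$ of vertices such that every path on $k$ vertices in $G$ contains at least one vertex of $S$. $\psi_k(G)$ denotes the minimum cardinality of a $k$-PVC of $G$, and a minimum $k$-PVC is a $k$-PVC of cardinality $\psi_k(G)$. *)

theory Defs
  imports Main
begin

type_synonym 'a graph = "'a set \<times> 'a set set"

definition verts :: "'a graph \<Rightarrow> 'a set" where "verts G = fst G"
definition edges :: "'a graph \<Rightarrow> 'a set set" where "edges G = snd G"

definition simple_graph :: "'a graph \<Rightarrow> bool" where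
  "simple_graph G \<longleftrightarrow> finite (verts G) \<and>
     (\<forall>e\<in>edges G. e \<subseteq> verts G \<and> card e = 2)"

definition adj :: "'a graph \<Rightarrow> 'a \<Rightarrow> 'a \<Rightarrow> bool" where
  "adj G u v \<longleftrightarrow> {u, v} \<in> edges G"

definition is_path :: "'a graph \<Rightarrow> 'a list \<Rightarrow> bool" where
  "is_path G p \<longleftrightarrow> p \<noteq> [] \<and> distinct p \<and> set p \<subseteq> verts G \<and>
     (\<forall>i. Suc i < length p \<longrightarrow> adj G (p ! i) (p ! Suc i))"

definition is_kpvc :: "'a graph \<Rightarrow> nat \<Rightarrow> 'a set \<Rightarrow> bool" where
  "is_kpvc G k S \<longleftrightarrow> S \<subseteq> verts G \<and>
     (\<forall>p. is_path G p \<and> length p = k \<longrightarrow> set p \<inter> S \<noteq> {})"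

definition psi :: "'a graph \<Rightarrow> nat \<Rightarrow> nat" where
  "psi G k = Min (card ` {S. is_kpvc G k S})"

definition is_min_kpvc :: "'a graph \<Rightarrow> nat \<Rightarrow> 'a set \<Rightarrow> bool" where
  "is_min_kpvc G k S \<longleftrightarrow> is_kpvc G k S \<and> card S = psi G k"

definition induced_subgraph :: "'a graph \<Rightarrow> 'a set \<Rightarrow> 'a graph" where
  "induced_subgraph G W = (W, {e\<in>edges G. e \<subseteq> W})"

definition graph_iso :: "'a graph \<Rightarrow> 'b graph \<Rightarrow> bool" where
  "graph_iso G H \<longleftrightarrow> (\<exists>f. bij_betw f (verts G) (verts H) \<and>
     (\<forall>u\<in>verts G. \<forall>v\<in>verts G. adj G u v \<longleftrightarrow> adj H (f u) (f v)))"

end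

theory Submission
  imports Defs "HOL-Library.Nat_Bijection" "HOL-Library.Disjoint_Sets"
begin

text \<open>Attach to every vertex w of H a clique on w together with k - 1 fresh vertices.
  These k-cliques are pairwise disjoint and each contains a path on k vertices, so every
  k-PVC needs at least one vertex per clique, i.e. at least |V(H)| vertices. Conversely,
  once V(H) is removed only the fresh parts of the cliques remain, which are components
  with k - 1 vertices; so V(H) is a k-PVC, and H is still the subgraph induced on V(H).\<close>

lemma is_min_kpvcI:
  assumes "finite (verts G)" "is_kpvc G k S" "\<And>T. is_kpvc G k T \<Longrightarrow> card S \<le> card T"
  shows "is_min_kpvc G k S"
proof -
  have "{T. is_kpvc G k T} \<subseteq> Pow (verts G)" by (auto simp: is_kpvc_def)
  then have "finite (card ` {T. is_kpvc G k T})"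
    using assms(1) by (meson finite_Pow_iff finite_imageI finite_subset)
  then have "psi G k = card S"
    unfolding psi_def using assms(2,3) by (intro Min_eqI) auto
  then show ?thesis using assms(2) by (simp add: is_min_kpvc_def)
qed

lemma card_le_kpvc_if_disjoint_paths:
  assumes "finite (verts G)" "is_kpvc G k S"
    and "\<And>w. w \<in> W \<Longrightarrow> is_path G (P w) \<and> length (P w) = k"
    and "disjoint_family_on (\<lambda>w. set (P w)) W"
  shows "card W \<le> card S"
proof -
  have "\<forall>w\<in>W. \<exists>v. v \<in> S \<inter> set (P w)"
    using assms(2,3) unfolding is_kpvc_def by blast
  then obtain h where h: "\<And>w. w \<in> W \<Longrightarrow> h w \<in> S \<inter> set (P w)" by metis
  have "inj_on h W"
  proof (rule inj_onI)
    fix w w' assume "w \<in> W" "w' \<in> W" "h w = h w'"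
    then show "w = w'"
      using h[of w] h[of w'] assms(4) by (auto simp: disjoint_family_on_def)
  qed
  moreover have "finite S"
    using assms(1,2) by (auto simp: is_kpvc_def intro: finite_subset)
  ultimately show ?thesis using h by (intro card_inj_on_le) auto
qed

definition clique_edges :: "'a set \<Rightarrow> 'a set set" where
  "clique_edges A = {{a, b} | a b. a \<in> A \<and> b \<in> A \<and> a \<noteq> b}"

lemma is_path_if_clique:
  assumes "clique_edges A \<subseteq> edges G" "A \<subseteq> verts G"
    and "p \<noteq> []" "distinct p" "set p \<subseteq> A"
  shows "is_path G p"
  unfolding is_path_def
proof (intro conjI allI impI)
  fix i assume "Suc i < length p"
  then have "p ! i \<in> A" "p ! Suc i \<in> A" "p ! i \<noteq> p ! Suc i"
    using assms(4,5) by (auto simp: nth_eq_iff_index_eq)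
  then show "adj G (p ! i) (p ! Suc i)"
    using assms(1) by (auto simp: adj_def clique_edges_def)
qed (use assms in auto)

lemma set_subset_block_if_steps_in_blocks:
  assumes "disjoint_family_on B W"
    and "\<And>i. Suc i < length p \<Longrightarrow> \<exists>w\<in>W. p ! i \<in> B w \<and> p ! Suc i \<in> B w"
    and "w\<^sub>0 \<in> W" "p ! 0 \<in> B w\<^sub>0"
  shows "set p \<subseteq> B w\<^sub>0"
proof -
  have "p ! i \<in> B w\<^sub>0" if "i < length p" for i
    using that
  proof (induction i)
    case (Suc i)
    then obtain w where "w \<in> W" "p ! i \<in> B w" "p ! Suc i \<in> B w"
      using assms(2) by blast
    with Suc assms(1,3) show ?case by (auto dest: disjoint_family_onD)
  qed (use assms(4) in simp)
  then show ?thesis by (auto simp: in_set_conv_nth)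
qed

lemma fresh_disjoint_sets_exist:
  fixes A :: "'a set" and W :: "'b set"
  assumes "infinite (UNIV :: 'a set)" "finite A" "finite W"
  obtains X :: "'b \<Rightarrow> 'a set"
  where "\<And>w. X w \<inter> A = {}" "\<And>w. w \<in> W \<Longrightarrow> finite (X w) \<and> card (X w) = n"
    and "disjoint_family_on X W"
proof -
  have "infinite (UNIV - A)" using assms(1,2) by (simp add: Diff_infinite_finite)
  then obtain f :: "nat \<Rightarrow> 'a" where f: "inj f" "range f \<subseteq> UNIV - A"
    using infinite_countable_subset by blast
  obtain g :: "'b \<Rightarrow> nat" where g: "inj_on g W"
    using finite_imp_inj_to_nat_seg[OF assms(3)] by blast
  define X where "X w = (\<lambda>i. f (prod_encode (g w, i))) ` {..<n}" for w
  have X_eq: "f (prod_encode (g w, i)) = f (prod_encode (g w', j)) \<longleftrightarrow> g w = g w' \<and> i = j"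
    for w w' i j
    using f(1) by (simp add: inj_eq)
  have "\<And>w. X w \<inter> A = {}" using f(2) by (auto simp: X_def)
  moreover have "finite (X w) \<and> card (X w) = n" for w
    unfolding X_def using X_eq by (simp add: card_image inj_on_def)
  moreover have "disjoint_family_on X W"
    using g by (auto simp: disjoint_family_on_def X_def X_eq dest: inj_onD)
  ultimately show thesis using that by blast
qed

definition attach_cliques :: "'a graph \<Rightarrow> ('a \<Rightarrow> 'a set) \<Rightarrow> 'a graph" where
  "attach_cliques H X =
     (verts H \<union> (\<Union>w\<in>verts H. X w),
      edges H \<union> (\<Union>w\<in>verts H. clique_edges (insert w (X w))))"

lemma verts_attach_cliques: "verts (attach_cliques H X) = verts H \<union> (\<Union>w\<in>verts H. X w)"
  and edges_attach_cliques:
    "edges (attach_cliques H X) = edges H \<union> (\<Union>w\<in>verts H. clique_edges (insert w (X w)))"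
  by (simp_all add: attach_cliques_def verts_def edges_def)

lemma simple_graph_attach_cliques:
  assumes "simple_graph H" "\<And>w. w \<in> verts H \<Longrightarrow> finite (X w)"
  shows "simple_graph (attach_cliques H X)"
  using assms
  by (fastforce simp: simple_graph_def verts_attach_cliques edges_attach_cliques clique_edges_def)

lemma graph_iso_refl: "graph_iso G G"
  unfolding graph_iso_def by (intro exI[of _ id]) simp

locale clique_attachment =
  fixes H :: "'a graph" and X :: "'a \<Rightarrow> 'a set" and k :: nat
  assumes simple: "simple_graph H"
    and fresh: "\<And>w. X w \<inter> verts H = {}"
    and disjoint: "disjoint_family_on X (verts H)"
    and card_fresh: "\<And>w. w \<in> verts H \<Longrightarrow> finite (X w) \<and> card (X w) = k - 1"
    and k_pos: "k \<ge> 1"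
begin

abbreviation "G \<equiv> attach_cliques H X"

lemma edges_H_subset: "e \<in> edges H \<Longrightarrow> e \<subseteq> verts H"
  using simple by (simp add: simple_graph_def)

lemma simple_graph_G: "simple_graph G"
  using simple card_fresh by (intro simple_graph_attach_cliques) auto

lemma induced_subgraph_G: "induced_subgraph G (verts H) = H"
proof -
  have "{e \<in> edges G. e \<subseteq> verts H} = edges H"
    using edges_H_subset fresh
    by (auto simp: edges_attach_cliques clique_edges_def)
  then show ?thesis by (simp add: induced_subgraph_def verts_def edges_def)
qed

lemma disjoint_cliques: "disjoint_family_on (\<lambda>w. insert w (X w)) (verts H)"
  using disjoint fresh by (fastforce simp: disjoint_family_on_def)

lemma edge_outside_H_in_fresh:
  assumes "{a, b} \<in> edges G" "a \<notin> verts H" "b \<notin> verts H"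
  shows "\<exists>w\<in>verts H. a \<in> X w \<and> b \<in> X w"
  using assms edges_H_subset
  by (fastforce simp: edges_attach_cliques clique_edges_def doubleton_eq_iff)

lemma kpvc_verts_H: "is_kpvc G k (verts H)"
  unfolding is_kpvc_def
proof (intro conjI allI impI)
  show "verts H \<subseteq> verts G" by (simp add: verts_attach_cliques)
  fix p assume p: "is_path G p \<and> length p = k"
  show "set p \<inter> verts H \<noteq> {}"
  proof
    assume avoid: "set p \<inter> verts H = {}"
    have "p ! 0 \<in> set p" "set p \<subseteq> verts G" using p by (auto simp: is_path_def)
    then obtain w\<^sub>0 where w\<^sub>0: "w\<^sub>0 \<in> verts H" "p ! 0 \<in> X w\<^sub>0"
      using avoid by (auto simp: verts_attach_cliques)
    have "set p \<subseteq> X w\<^sub>0"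
    proof (rule set_subset_block_if_steps_in_blocks[OF disjoint _ w\<^sub>0])
      fix i assume "Suc i < length p"
      then show "\<exists>w\<in>verts H. p ! i \<in> X w \<and> p ! Suc i \<in> X w"
        using p avoid by (intro edge_outside_H_in_fresh) (auto simp: is_path_def adj_def disjoint_iff)
    qed
    then have "length p \<le> k - 1"
      using p card_fresh[OF w\<^sub>0(1)] card_mono by (fastforce simp: is_path_def distinct_card[symmetric])
    then show False using p k_pos by simp
  qed
qed

lemma clique_path_exists:
  assumes "w \<in> verts H"
  obtains p where "is_path G p" "length p = k" "set p = insert w (X w)"
proof -
  obtain xs where xs: "distinct xs" "set xs = X w"
    using card_fresh[OF assms] finite_distinct_list by blast
  have "w \<notin> X w" using fresh assms by blast
  then have "distinct (w # xs)" "length (w # xs) = k"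
    using xs card_fresh[OF assms] k_pos by (auto simp: distinct_card[symmetric])
  moreover have "is_path G (w # xs)"
    using assms xs \<open>distinct (w # xs)\<close>
    by (intro is_path_if_clique[of "insert w (X w)"])
       (auto simp: edges_attach_cliques verts_attach_cliques)
  ultimately show thesis using that xs by simp
qed

lemma min_kpvc_verts_H: "is_min_kpvc G k (verts H)"
proof (rule is_min_kpvcI)
  show "finite (verts G)" using simple_graph_G by (simp add: simple_graph_def)
  show "is_kpvc G k (verts H)" by (rule kpvc_verts_H)
  have "\<forall>w\<in>verts H. \<exists>p. is_path G p \<and> length p = k \<and> set p = insert w (X w)"
    using clique_path_exists by metis
  then obtain P where P: "\<And>w. w \<in> verts H \<Longrightarrow>
      is_path G (P w) \<and> length (P w) = k \<and> set (P w) = insert w (X w)"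
    by metis
  have "disjoint_family_on (\<lambda>w. set (P w)) (verts H)"
    using disjoint_cliques P by (simp add: disjoint_family_on_def)
  then show "card (verts H) \<le> card T" if "is_kpvc G k T" for T
    using P \<open>finite (verts G)\<close> that by (intro card_le_kpvc_if_disjoint_paths) auto
qed

end

theorem mainTheorem4:
  fixes H :: "'a graph" and k :: nat
  assumes "k \<ge> 1"
    and "infinite (UNIV :: 'a set)"
    and "simple_graph H"
  shows "\<exists>G :: 'a graph. simple_graph G \<and> verts H \<subseteq> verts G \<and>
           graph_iso (induced_subgraph G (verts H)) H \<and>
           is_min_kpvc G k (verts H)"
proof -
  have "finite (verts H)" using assms(3) by (simp add: simple_graph_def)
  then obtain X :: "'a \<Rightarrow> 'a set" where
    "\<And>w. X w \<inter> verts H = {}" "\<And>w. w \<in> verts H \<Longrightarrow> finite (X w) \<and> card (X w) = k - 1"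
    "disjoint_family_on X (verts H)"
    using fresh_disjoint_sets_exist[OF assms(2)] by metis
  then interpret clique_attachment H X k
    using assms(1,3) by unfold_locales auto
  show ?thesis
    using simple_graph_G induced_subgraph_G min_kpvc_verts_H graph_iso_refl[of H]
    by (intro exI[of _ G]) (auto simp: verts_attach_cliques)
qed

end
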